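(* Let $\mathcal C$ be a nondegenerate conic section in the projective plane, let $N\ge 2$ be an integer, and let $U,X_1,\dots,X_N,V,Y_N,\dots,Y_1$ be the consecutive vertices of a polygon $UX_1\dots X_NVY_N\dots Y_1$ inscribed in $\mathcal C$. Define the intersection points $A_j=X_jX_{j+1}\cap Y_jY_{j+1}$ for $j=1,\dots,N-1$, and \[ B = UX_1\cap Y_{2n}V,\quad C = UY_1\cap X_{2n}V \quad\text{if } N=2n, \] \[ B = UX_1\cap X_{2n+1}V,\quad C = UY_1\cap Y_{2n+1}V \quad\text{if } N=2n+1. \] If all of the points $A_1,\dots,A_{N-1},B,C$ except possibly one are collinear, then the remaining point lies on the same line as well.
   Context: $PQ$ denotes the line through points $P,Q$, and $\ell\cap m$ the intersection point of two lines. The points are assumed to be such that all the lines and intersection points above are well defined (i.e. in general position). *)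

theory Defs
  imports "HOL-Analysis.Analysis" "HOL-Analysis.Cross3"
begin

text \<open>Real projective plane in homogeneous coordinates: a point is a nonzero vector
  in real^3 (up to nonzero scaling); a line is likewise a nonzero vector l, and
  point P lies on line l iff l \<bullet> P = 0.\<close>

definition proj_same :: "real^3 \<Rightarrow> real^3 \<Rightarrow> bool" where
  "proj_same P Q \<longleftrightarrow> cross3 P Q = 0"

definition pjoin :: "real^3 \<Rightarrow> real^3 \<Rightarrow> real^3" where
  "pjoin P Q = cross3 P Q"

definition pmeet :: "real^3 \<Rightarrow> real^3 \<Rightarrow> real^3" where
  "pmeet l m = cross3 l m"

definition proj_collinear :: "(real^3) set \<Rightarrow> bool" where
  "proj_collinear S \<longleftrightarrow> (\<exists>l::real^3. l \<noteq> 0 \<and> (\<forall>P\<in>S. l \<bullet> P = 0))"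

definition nondeg_conic :: "real^3^3 \<Rightarrow> bool" where
  "nondeg_conic M \<longleftrightarrow> transpose M = M \<and> det M \<noteq> 0"

definition on_conic :: "real^3^3 \<Rightarrow> real^3 \<Rightarrow> bool" where
  "on_conic M P \<longleftrightarrow> P \<bullet> (M *v P) = 0"

end

theory Submission
  imports Defs
begin

unbundle cross3_syntax

text \<open>
  Write \<open>\<beta>\<close> for the polar form of the conic. For a point \<open>P\<close> off the conic, the map
  \<open>\<sigma>\<^sub>P z = \<beta>(P,P) z - 2 \<beta>(P,z) P\<close> is, projectively, the harmonic homology with centre \<open>P\<close>:
  an involution preserving the conic, which exchanges the two ends of every chord through \<open>P\<close>.
  So the reflection at \<open>A\<^sub>j\<close> exchanges \<open>X\<^sub>j, X\<^sub>j\<^sub>+\<^sub>1\<close> and \<open>Y\<^sub>j, Y\<^sub>j\<^sub>+\<^sub>1\<close>, \<open>\<sigma>\<^sub>B\<close> exchanges \<open>U, X\<^sub>1\<close> and \<open>V\<close>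
  with \<open>Y\<^sub>N\<close> or \<open>X\<^sub>N\<close>, and \<open>\<sigma>\<^sub>C\<close> exchanges \<open>U, Y\<^sub>1\<close> and \<open>V\<close> with the other one.
  If \<open>p, q, r\<close> lie on one line then \<open>\<sigma>\<^sub>p \<sigma>\<^sub>q \<sigma>\<^sub>r = \<sigma>\<^sub>r \<sigma>\<^sub>q \<sigma>\<^sub>p\<close> up to a scalar.

  Let the line \<open>l\<close> carry all the points but one, the meet of two chords \<open>c, c'\<close>, and let
  \<open>a\<close> be the point where \<open>l\<close> meets \<open>c\<close>, so that \<open>\<sigma>\<^sub>a\<close> exchanges the ends of \<open>c\<close>. Going round
  the polygon with the reflections at the points on \<open>l\<close>, and reordering them by the rule
  for three collinear centres, one finds that \<open>\<sigma>\<^sub>a\<close> also exchanges the ends of \<open>c'\<close>. Hence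
  \<open>a\<close> lies on \<open>c'\<close>, so \<open>a\<close> is the remaining point, and it lies on \<open>l\<close>.
\<close>

section \<open>Reflections in the polar form of a conic\<close>

definition cform :: "real^3^3 \<Rightarrow> real^3 \<Rightarrow> real^3 \<Rightarrow> real" where
  "cform M x y = x \<bullet> (M *v y)"

lemma cform_add_left: "cform M (x + y) z = cform M x z + cform M y z"
  and cform_add_right: "cform M z (x + y) = cform M z x + cform M z y"
  and cform_diff_left: "cform M (x - y) z = cform M x z - cform M y z"
  and cform_diff_right: "cform M z (x - y) = cform M z x - cform M z y"
  and cform_scaleR_left: "cform M (c *\<^sub>R x) z = c * cform M x z"
  and cform_scaleR_right: "cform M z (c *\<^sub>R x) = c * cform M z x"
  by (simp_all add: cform_def inner_add_left inner_add_right inner_diff_left inner_diff_right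
      matrix_vector_right_distrib matrix_vector_mult_diff_distrib matrix_vector_mult_scaleR)

lemmas cform_linear =
  cform_add_left cform_add_right cform_diff_left cform_diff_right cform_scaleR_left cform_scaleR_right

lemma cform_commute: "transpose M = M \<Longrightarrow> cform M x y = cform M y x"
  unfolding cform_def by (metis dot_lmul_matrix inner_commute vector_transpose_matrix)

lemma on_conic_iff_cform: "on_conic M P \<longleftrightarrow> cform M P P = 0"
  by (simp add: on_conic_def cform_def)

lemma nondeg_conic_symmetric: "nondeg_conic M \<Longrightarrow> transpose M = M"
  by (simp add: nondeg_conic_def)

lemma nondeg_conic_mult_eq_0: "nondeg_conic M \<Longrightarrow> M *v x = 0 \<longleftrightarrow> x = 0"
  unfolding nondeg_conic_def
  by (metis invertible_det_nz matrix_left_invertible_ker invertible_def matrix_vector_mult_0_right)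

definition proportional :: "'a::real_vector \<Rightarrow> 'a \<Rightarrow> bool" (infix "\<simeq>" 50) where
  "x \<simeq> y \<longleftrightarrow> (\<exists>c. c \<noteq> 0 \<and> x = c *\<^sub>R y)"

lemma proportional_refl [simp]: "x \<simeq> x"
  unfolding proportional_def by (rule exI[of _ 1]) simp

lemma proportional_sym: "x \<simeq> y \<Longrightarrow> y \<simeq> x"
  unfolding proportional_def by (metis scaleR_scaleR right_inverse scaleR_one inverse_nonzero_iff_nonzero)

lemma proportional_trans [trans]: "x \<simeq> y \<Longrightarrow> y \<simeq> z \<Longrightarrow> x \<simeq> z"
  unfolding proportional_def by (metis scaleR_scaleR mult_eq_0_iff)

lemma proportional_scaleR_right_iff: "c \<noteq> 0 \<Longrightarrow> x \<simeq> c *\<^sub>R y \<longleftrightarrow> x \<simeq> y"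
  unfolding proportional_def by (metis scaleR_scaleR mult_eq_0_iff nonzero_divide_eq_eq mult.commute)

lemma proportional_scaleR_left_iff: "c \<noteq> 0 \<Longrightarrow> c *\<^sub>R x \<simeq> y \<longleftrightarrow> x \<simeq> y"
  using proportional_scaleR_right_iff proportional_sym by metis

lemma scaleR_proportional: "c \<noteq> 0 \<Longrightarrow> c *\<^sub>R x \<simeq> x"
  unfolding proportional_def by blast

lemma proportional_uminus_left [simp]: "- x \<simeq> y \<longleftrightarrow> x \<simeq> y"
  using proportional_scaleR_left_iff[of "-1"] by simp

definition reflect :: "real^3^3 \<Rightarrow> real^3 \<Rightarrow> real^3 \<Rightarrow> real^3" where
  "reflect M p z = cform M p p *\<^sub>R z - (2 * cform M p z) *\<^sub>R p"

lemma reflect_scaleR: "reflect M p (c *\<^sub>R z) = c *\<^sub>R reflect M p z"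
  unfolding reflect_def by (simp add: cform_linear algebra_simps)

lemma reflect_scaleR_center: "reflect M (c *\<^sub>R p) z = c\<^sup>2 *\<^sub>R reflect M p z"
  unfolding reflect_def by (simp add: cform_linear algebra_simps power2_eq_square)

lemma reflect_reflect:
  assumes "transpose M = M"
  shows "reflect M p (reflect M p z) = (cform M p p)\<^sup>2 *\<^sub>R z"
  unfolding reflect_def
  by (simp add: cform_linear cform_commute[OF assms, of z p] algebra_simps power2_eq_square)

lemma reflect_proportional: "x \<simeq> y \<Longrightarrow> reflect M p x \<simeq> reflect M p y"
  unfolding proportional_def by (metis reflect_scaleR)

lemma inner_reflect: "l \<bullet> p = 0 \<Longrightarrow> l \<bullet> reflect M p z = cform M p p * (l \<bullet> z)"
  unfolding reflect_def by (simp add: inner_diff_right)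

lemma reflect_preserves_line:
  assumes "l \<bullet> p = 0" "l \<bullet> P = 0" "reflect M p P \<simeq> Q"
  shows "l \<bullet> Q = 0"
  using assms unfolding proportional_def by (metis inner_reflect inner_scaleR_right mult_zero_right no_zero_divisors)

definition swaps :: "real^3^3 \<Rightarrow> real^3 \<Rightarrow> real^3 \<Rightarrow> real^3 \<Rightarrow> bool" where
  "swaps M p P Q \<longleftrightarrow> cform M p p \<noteq> 0 \<and> reflect M p P \<simeq> Q"

lemma swaps_sym:
  assumes "transpose M = M" "swaps M p P Q"
  shows "swaps M p Q P"
proof -
  have "reflect M p Q \<simeq> reflect M p (reflect M p P)"
    using assms(2) by (auto simp: swaps_def intro: reflect_proportional proportional_sym)
  then show ?thesis
    using assms by (simp add: swaps_def reflect_reflect proportional_scaleR_right_iff)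
qed

lemma swaps_preserves_line:
  assumes "transpose M = M" "swaps M p P Q" "l \<bullet> p = 0"
  shows "l \<bullet> P = 0 \<longleftrightarrow> l \<bullet> Q = 0"
  using assms swaps_sym[OF assms(1,2)] reflect_preserves_line unfolding swaps_def by blast

lemma swaps_scaleR_center: "c \<noteq> 0 \<Longrightarrow> swaps M (c *\<^sub>R p) P Q \<longleftrightarrow> swaps M p P Q"
  by (simp add: swaps_def reflect_scaleR_center cform_linear proportional_scaleR_left_iff)

definition reflect_list :: "real^3^3 \<Rightarrow> (real^3) list \<Rightarrow> real^3 \<Rightarrow> real^3" where
  "reflect_list M ps = foldr (reflect M) ps"

lemma reflect_list_Nil [simp]: "reflect_list M [] z = z"
  and reflect_list_Cons [simp]: "reflect_list M (p # ps) z = reflect M p (reflect_list M ps z)"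
  and reflect_list_append: "reflect_list M (ps @ qs) z = reflect_list M ps (reflect_list M qs z)"
  by (simp_all add: reflect_list_def)

lemma reflect_list_scaleR: "reflect_list M ps (c *\<^sub>R z) = c *\<^sub>R reflect_list M ps z"
  by (induction ps) (simp_all add: reflect_scaleR)

lemma reflect_list_proportional: "x \<simeq> y \<Longrightarrow> reflect_list M ps x \<simeq> reflect_list M ps y"
  unfolding proportional_def by (metis reflect_list_scaleR)

lemma reflect_list_rev:
  assumes "transpose M = M"
  shows "reflect_list M (rev ps) (reflect_list M ps z) = (\<Prod>p\<leftarrow>ps. (cform M p p)\<^sup>2) *\<^sub>R z"
  by (induction ps arbitrary: z) (simp_all add: reflect_list_append reflect_reflect[OF assms] reflect_list_scaleR)

lemma reflect_list_proportional_cancel: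
  assumes "transpose M = M" "\<forall>p\<in>set ps. cform M p p \<noteq> 0"
    and "reflect_list M ps x \<simeq> reflect_list M ps y"
  shows "x \<simeq> y"
proof -
  have "(\<Prod>p\<leftarrow>ps. (cform M p p)\<^sup>2) \<noteq> 0"
    using assms(2) by (induction ps) auto
  moreover have "(\<Prod>p\<leftarrow>ps. (cform M p p)\<^sup>2) *\<^sub>R x \<simeq> (\<Prod>p\<leftarrow>ps. (cform M p p)\<^sup>2) *\<^sub>R y"
    using reflect_list_proportional[OF assms(3), of M "rev ps"] by (simp add: reflect_list_rev[OF assms(1)])
  ultimately show ?thesis
    by (simp add: proportional_scaleR_left_iff proportional_scaleR_right_iff)
qed

lemma reflect_list_chain:
  assumes "a \<le> m" "\<And>i. a \<le> i \<Longrightarrow> i < m \<Longrightarrow> reflect M (p i) (P i) \<simeq> P (Suc i)"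
  shows "reflect_list M (map p (rev [a..<m])) (P a) \<simeq> P m"
  using assms
proof (induction m rule: dec_induct)
  case (step m)
  then have "reflect M (p m) (reflect_list M (map p (rev [a..<m])) (P a)) \<simeq> reflect M (p m) (P m)"
    by (simp add: reflect_proportional)
  also have "\<dots> \<simeq> P (Suc m)"
    using step by simp
  finally show ?case
    using step by simp
qed simp

section \<open>Three reflections with collinear centres\<close>

text \<open>
  For \<open>p = a e + b f\<close>, the reflection at \<open>p\<close> maps \<open>c\<^sub>0 z + c\<^sub>1 e + c\<^sub>2 f\<close> to a vector of the same
  form; \<open>frame_reflect\<close> is this action on the coefficients \<open>(c\<^sub>0, c\<^sub>1, c\<^sub>2)\<close>, where \<open>E, F, G\<close> are the
  values of the polar form on \<open>e, f\<close> and \<open>u, v\<close> its values on \<open>(e, z)\<close> and \<open>(f, z)\<close>. This reduces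
  the three-reflection rule to a polynomial identity.
\<close>

definition frame_reflect ::
  "real \<Rightarrow> real \<Rightarrow> real \<Rightarrow> real \<Rightarrow> real \<Rightarrow> real \<Rightarrow> real \<Rightarrow> real \<times> real \<times> real \<Rightarrow> real \<times> real \<times> real" where
  "frame_reflect E F G u v a b w = (case w of (c0, c1, c2) \<Rightarrow>
     (let q = a * a * E + 2 * a * b * F + b * b * G;
          m = c0 * (a * u + b * v) + c1 * (a * E + b * F) + c2 * (a * F + b * G)
      in (q * c0, q * c1 - 2 * m * a, q * c2 - 2 * m * b)))"

lemma frame_reflect_reverse3:
  "frame_reflect E F G u v a1 b1 (frame_reflect E F G u v a2 b2 (frame_reflect E F G u v a3 b3 (1, 0, 0))) =
   frame_reflect E F G u v a3 b3 (frame_reflect E F G u v a2 b2 (frame_reflect E F G u v a1 b1 (1, 0, 0)))"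
  unfolding frame_reflect_def Let_def by simp algebra

definition frame_vec :: "real^3 \<Rightarrow> real^3 \<Rightarrow> real^3 \<Rightarrow> real \<times> real \<times> real \<Rightarrow> real^3" where
  "frame_vec z e f w = (case w of (c0, c1, c2) \<Rightarrow> c0 *\<^sub>R z + c1 *\<^sub>R e + c2 *\<^sub>R f)"

lemma reflect_frame_vec:
  assumes "transpose M = M"
  shows "reflect M (a *\<^sub>R e + b *\<^sub>R f) (frame_vec z e f w) =
    frame_vec z e f (frame_reflect (cform M e e) (cform M e f) (cform M f f) (cform M e z) (cform M f z) a b w)"
proof -
  obtain c0 c1 c2 where w: "w = (c0, c1, c2)"
    by (cases w) auto
  have "cform M f e = cform M e f" "cform M z e = cform M e z" "cform M z f = cform M f z"
    using cform_commute[OF assms] by simp_all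
  then show ?thesis
    unfolding w frame_vec_def frame_reflect_def Let_def reflect_def
    by (simp add: cform_linear vec_eq_iff algebra_simps)
qed

lemma hyperplane_spanned_by_two:
  fixes l :: "real^3"
  assumes "l \<noteq> 0"
  obtains e f where "\<And>x. l \<bullet> x = 0 \<Longrightarrow> \<exists>a b. x = a *\<^sub>R e + b *\<^sub>R f"
proof -
  obtain S where S: "{x. l \<bullet> x = 0} \<subseteq> span S" "card S = dim {x. l \<bullet> x = 0}"
    by (meson basis_exists)
  moreover have "dim {x. l \<bullet> x = 0} = 2"
    using dim_hyperplane[OF assms] by simp
  ultimately obtain e f where "S = {e, f}"
    by (metis card_2_iff)
  have "\<exists>a b. x = a *\<^sub>R e + b *\<^sub>R f" if "l \<bullet> x = 0" for x
  proof -
    have "x \<in> span {e, f}"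
      using S(1) \<open>S = {e, f}\<close> that by blast
    then obtain a b where "x - a *\<^sub>R e = b *\<^sub>R f"
      by (auto simp: span_insert span_singleton)
    then show ?thesis
      by (metis add.commute diff_eq_eq)
  qed
  then show ?thesis
    using that by blast
qed

lemma reflect_reverse3:
  assumes "transpose M = M" "l \<noteq> 0" "l \<bullet> p = 0" "l \<bullet> q = 0" "l \<bullet> r = 0"
  shows "reflect M p (reflect M q (reflect M r z)) = reflect M r (reflect M q (reflect M p z))"
proof -
  obtain e f where ef: "\<And>x. l \<bullet> x = 0 \<Longrightarrow> \<exists>a b. x = a *\<^sub>R e + b *\<^sub>R f"
    using hyperplane_spanned_by_two[OF assms(2)] by blast
  obtain a1 b1 a2 b2 a3 b3 where
    "p = a1 *\<^sub>R e + b1 *\<^sub>R f" "q = a2 *\<^sub>R e + b2 *\<^sub>R f" "r = a3 *\<^sub>R e + b3 *\<^sub>R f"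
    using ef assms(3-5) by meson
  moreover have "z = frame_vec z e f (1, 0, 0)"
    by (simp add: frame_vec_def)
  ultimately show ?thesis
    by (metis reflect_frame_vec[OF assms(1)] frame_reflect_reverse3)
qed

definition reflect_pair :: "real^3^3 \<Rightarrow> bool \<Rightarrow> real^3 \<Rightarrow> real^3 \<Rightarrow> real^3 \<Rightarrow> real^3" where
  "reflect_pair M b p q z = (if b then reflect M p (reflect M q z) else reflect M q (reflect M p z))"

lemma reflect_pair_cancel:
  assumes "transpose M = M"
  shows "reflect_pair M b p q (reflect_pair M (\<not> b) p q z) = ((cform M p p)\<^sup>2 * (cform M q q)\<^sup>2) *\<^sub>R z"
  by (cases b) (simp_all add: reflect_pair_def reflect_reflect[OF assms] reflect_scaleR)

lemma reflect_pair_proportional: "x \<simeq> y \<Longrightarrow> reflect_pair M b p q x \<simeq> reflect_pair M b p q y"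
  by (simp add: reflect_pair_def reflect_proportional)

lemma reflect_reflect_pair:
  assumes "transpose M = M" "l \<noteq> 0" "l \<bullet> a = 0" "l \<bullet> p = 0" "l \<bullet> q = 0"
  shows "reflect M a (reflect_pair M b p q z) = reflect_pair M (\<not> b) p q (reflect M a z)"
  using assms by (cases b) (simp_all add: reflect_pair_def reflect_reverse3)

lemma reflect_list_reflect_pair:
  assumes "transpose M = M" "l \<noteq> 0" "\<forall>a\<in>set ps. l \<bullet> a = 0" "l \<bullet> p = 0" "l \<bullet> q = 0"
  shows "reflect_list M ps (reflect_pair M b p q z) = reflect_pair M (b = even (length ps)) p q (reflect_list M ps z)"
  using assms(3) by (induction ps) (simp_all add: reflect_reflect_pair[OF assms(1,2) _ assms(4,5)])

section \<open>Chords of a nondegenerate conic\<close>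

lemma triple_product_eq_0:
  assumes "l \<noteq> 0" "l \<bullet> x = 0" "l \<bullet> y = 0" "l \<bullet> z = 0"
  shows "(x \<times> y) \<bullet> z = 0"
proof -
  have "(l \<bullet> x) *\<^sub>R (y \<times> z) + (l \<bullet> y) *\<^sub>R (z \<times> x) + (l \<bullet> z) *\<^sub>R (x \<times> y) = ((x \<times> y) \<bullet> z) *\<^sub>R l"
    by (simp add: cross3_simps forall_3)
  then show ?thesis
    using assms by simp
qed

lemma cform_chord_point:
  assumes "transpose M = M" "cform M P P = 0" "cform M Q Q = 0"
  shows "cform M (s *\<^sub>R P + t *\<^sub>R Q) (s *\<^sub>R P + t *\<^sub>R Q) = 2 * s * t * cform M P Q"
  using assms cform_commute[OF assms(1), of Q P] by (simp add: cform_linear algebra_simps)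

lemma reflect_chord_point:
  assumes "transpose M = M" "cform M P P = 0" "cform M Q Q = 0"
  shows "reflect M (s *\<^sub>R P + t *\<^sub>R Q) P = (- 2 * t\<^sup>2 * cform M P Q) *\<^sub>R Q"
  using assms cform_commute[OF assms(1), of Q P]
  by (simp add: reflect_def cform_chord_point cform_linear algebra_simps power2_eq_square)

lemma conic_cform_ne_0:
  assumes conic: "nondeg_conic M" and "on_conic M P" "on_conic M Q" and PQ: "P \<times> Q \<noteq> 0"
  shows "cform M P Q \<noteq> 0"
proof
  txt \<open>Otherwise the plane of \<open>P, Q\<close> is isotropic: \<open>M P\<close> and \<open>M Q\<close> are both normal to it, hence
    parallel, against the invertibility of \<open>M\<close>.\<close>
  assume "cform M P Q = 0"
  then have orth: "(M *v P) \<bullet> P = 0" "(M *v P) \<bullet> Q = 0" "(M *v Q) \<bullet> P = 0" "(M *v Q) \<bullet> Q = 0"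
    using assms cform_commute[OF nondeg_conic_symmetric[OF conic], of P Q]
    by (simp_all add: on_conic_iff_cform cform_def inner_commute)
  define w where "w = P \<times> Q"
  have parallel: "(w \<bullet> w) *\<^sub>R (M *v R) = (w \<bullet> (M *v R)) *\<^sub>R w"
    if "(M *v R) \<bullet> P = 0" "(M *v R) \<bullet> Q = 0" for R
    using Lagrange[of w "M *v R" w] Lagrange[of "M *v R" P Q] that by (simp add: w_def)
  have "(w \<bullet> w) *\<^sub>R ((w \<bullet> (M *v Q)) *\<^sub>R (M *v P) - (w \<bullet> (M *v P)) *\<^sub>R (M *v Q))
      = (w \<bullet> (M *v Q)) *\<^sub>R ((w \<bullet> w) *\<^sub>R (M *v P)) - (w \<bullet> (M *v P)) *\<^sub>R ((w \<bullet> w) *\<^sub>R (M *v Q))"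
    by (simp add: algebra_simps)
  also have "\<dots> = 0"
    using parallel[of P] parallel[of Q] orth by simp
  finally have "M *v ((w \<bullet> (M *v Q)) *\<^sub>R P - (w \<bullet> (M *v P)) *\<^sub>R Q) = 0"
    using PQ by (simp add: w_def matrix_vector_mult_diff_distrib matrix_vector_mult_scaleR)
  then have "(w \<bullet> (M *v Q)) *\<^sub>R P = (w \<bullet> (M *v P)) *\<^sub>R Q"
    by (simp add: nondeg_conic_mult_eq_0[OF conic])
  then have "(w \<bullet> (M *v Q)) *\<^sub>R (P \<times> Q) = 0"
    by (metis cross_mult_left cross_refl scaleR_zero_right)
  then have "M *v Q = 0"
    using parallel[of Q] orth PQ by (simp add: w_def)
  then show False
    using PQ by (simp add: nondeg_conic_mult_eq_0[OF conic])
qed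

lemma swaps_chord_point:
  assumes "nondeg_conic M" "on_conic M P" "on_conic M Q" "P \<times> Q \<noteq> 0" "s \<noteq> 0" "t \<noteq> 0"
  shows "swaps M (s *\<^sub>R P + t *\<^sub>R Q) P Q"
proof -
  have sym: "transpose M = M"
    using assms(1) by (rule nondeg_conic_symmetric)
  have "cform M P P = 0" "cform M Q Q = 0" "cform M P Q \<noteq> 0"
    using assms conic_cform_ne_0 by (simp_all add: on_conic_iff_cform)
  then show ?thesis
    using assms(5,6)
    by (simp add: swaps_def cform_chord_point[OF sym] reflect_chord_point[OF sym] scaleR_proportional)
qed

definition conic_points :: "real^3^3 \<Rightarrow> (real^3) set \<Rightarrow> bool" where
  "conic_points M S \<longleftrightarrow> (\<forall>P\<in>S. on_conic M P) \<and> (\<forall>P\<in>S. \<forall>Q\<in>S. P \<noteq> Q \<longrightarrow> P \<times> Q \<noteq> 0)"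

lemma conic_points_subset: "conic_points M S \<Longrightarrow> T \<subseteq> S \<Longrightarrow> conic_points M T"
  unfolding conic_points_def by blast

lemma conic_no_three_collinear:
  assumes conic: "nondeg_conic M" and S: "conic_points M {P, Q, R}" and "distinct [P, Q, R]"
  shows "(P \<times> Q) \<bullet> R \<noteq> 0"
proof
  assume coplanar: "(P \<times> Q) \<bullet> R = 0"
  have on: "on_conic M P" "on_conic M Q" "on_conic M R"
    and ne: "P \<times> Q \<noteq> 0" "R \<times> P \<noteq> 0" "R \<times> Q \<noteq> 0"
    using S assms(3) by (auto simp: conic_points_def)
  define w where "w = P \<times> Q"
  have "w \<bullet> w \<noteq> 0"
    using ne(1) by (simp add: w_def)
  then have "R = inverse (w \<bullet> w) *\<^sub>R ((w \<bullet> w) *\<^sub>R R)"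
    by simp
  also have "(w \<bullet> w) *\<^sub>R R = (R \<bullet> (Q \<times> w)) *\<^sub>R P + (P \<bullet> (R \<times> w)) *\<^sub>R Q + ((P \<times> Q) \<bullet> R) *\<^sub>R w"
    by (simp add: w_def cross3_simps forall_3)
  finally obtain s t where R: "R = s *\<^sub>R P + t *\<^sub>R Q"
    using coplanar by (auto simp: scaleR_add_right)
  have "2 * s * t * cform M P Q = 0"
    using on R cform_chord_point[OF nondeg_conic_symmetric[OF conic], of P Q s t]
    by (simp add: on_conic_iff_cform)
  then have "s = 0 \<or> t = 0"
    using conic_cform_ne_0[OF conic on(1,2) ne(1)] by simp
  then show False
    using ne R by (auto simp: cross_mult_left)
qed

lemma conic_line_meets_at_most_two:
  assumes "nondeg_conic M" "conic_points M {P, Q, R}" "distinct [P, Q, R]" "l \<noteq> 0"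
  shows "\<not> (l \<bullet> P = 0 \<and> l \<bullet> Q = 0 \<and> l \<bullet> R = 0)"
  using conic_no_three_collinear[OF assms(1-3)] triple_product_eq_0[OF assms(4)] by blast

lemma swaps_chord_meet_left:
  assumes conic: "nondeg_conic M" and S: "conic_points M {X, X', Y, Y'}" and "distinct [X, X', Y, Y']"
  shows "swaps M ((X \<times> X') \<times> (Y \<times> Y')) X X'"
proof -
  have A: "(X \<times> X') \<times> (Y \<times> Y') = (- ((Y \<times> Y') \<bullet> X')) *\<^sub>R X + ((Y \<times> Y') \<bullet> X) *\<^sub>R X'"
    by (metis Lagrange cross_skew minus_diff_eq scaleR_minus_left diff_conv_add_uminus add.commute)
  have "(Y \<times> Y') \<bullet> X \<noteq> 0" "(Y \<times> Y') \<bullet> X' \<noteq> 0"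
    using conic_no_three_collinear[OF conic, of Y Y' X] conic_no_three_collinear[OF conic, of Y Y' X']
      conic_points_subset[OF S] assms(3)
    by auto
  then have "swaps M ((- ((Y \<times> Y') \<bullet> X')) *\<^sub>R X + ((Y \<times> Y') \<bullet> X) *\<^sub>R X') X X'"
    using S assms(3) by (intro swaps_chord_point[OF conic]) (auto simp: conic_points_def)
  then show ?thesis
    by (simp only: A)
qed

lemma swaps_chord_meet:
  assumes conic: "nondeg_conic M" and S: "conic_points M {X, X', Y, Y'}" and "distinct [X, X', Y, Y']"
  shows "swaps M ((X \<times> X') \<times> (Y \<times> Y')) X X'" "swaps M ((X \<times> X') \<times> (Y \<times> Y')) Y Y'"
proof -
  show "swaps M ((X \<times> X') \<times> (Y \<times> Y')) X X'"
    using swaps_chord_meet_left[OF assms] .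
  have "swaps M ((Y \<times> Y') \<times> (X \<times> X')) Y Y'"
    using swaps_chord_meet_left[OF conic, of Y Y' X X'] S assms(3) by (auto simp: insert_commute)
  then show "swaps M ((X \<times> X') \<times> (Y \<times> Y')) Y Y'"
    using swaps_scaleR_center[of "-1" M] by (metis cross_skew scaleR_minus1_left neg_equal_0_iff_equal one_neq_zero)
qed

lemma reflect_line_chord_meet:
  assumes "nondeg_conic M" "on_conic M P" "on_conic M Q" "P \<times> Q \<noteq> 0" "l \<bullet> P \<noteq> 0"
  shows "reflect M (l \<times> (P \<times> Q)) P \<simeq> Q"
proof -
  have "cform M P P = 0" "cform M Q Q = 0" "cform M P Q \<noteq> 0"
    using assms conic_cform_ne_0 by (simp_all add: on_conic_iff_cform)
  then have "reflect M ((l \<bullet> Q) *\<^sub>R P + (- (l \<bullet> P)) *\<^sub>R Q) P = (- 2 * (- (l \<bullet> P))\<^sup>2 * cform M P Q) *\<^sub>R Q"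
    using reflect_chord_point[OF nondeg_conic_symmetric[OF assms(1)]] by blast
  moreover have "l \<times> (P \<times> Q) = (l \<bullet> Q) *\<^sub>R P + (- (l \<bullet> P)) *\<^sub>R Q"
    by (simp add: Lagrange)
  ultimately show ?thesis
    using assms(5) \<open>cform M P Q \<noteq> 0\<close> by (simp add: scaleR_proportional)
qed

lemma center_on_chord:
  assumes refl: "reflect M v Q \<simeq> Q'" and QQ': "Q \<times> Q' \<noteq> 0"
  shows "v \<noteq> 0" "v \<bullet> (Q \<times> Q') = 0"
proof -
  obtain c where c: "c \<noteq> 0" "cform M v v *\<^sub>R Q - (2 * cform M v Q) *\<^sub>R v = c *\<^sub>R Q'"
    using refl by (auto simp: proportional_def reflect_def)
  have "Q' \<noteq> 0"
    using QQ' by auto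
  then show "v \<noteq> 0"
    using c by (auto simp: cform_def)
  have "cform M v Q * (v \<bullet> (Q \<times> Q')) = 0"
    using arg_cong[OF c(2), of "\<lambda>x. x \<bullet> (Q \<times> Q')"] by (simp add: inner_diff_left dot_cross_self)
  moreover have "cform M v Q \<noteq> 0"
  proof
    assume "cform M v Q = 0"
    then have "cform M v v *\<^sub>R (Q \<times> Q') = 0"
      using arg_cong[OF c(2), of "\<lambda>x. x \<times> Q'"] by (simp add: cross_mult_left)
    then show False
      using c \<open>cform M v Q = 0\<close> \<open>Q' \<noteq> 0\<close> QQ' by simp
  qed
  ultimately show "v \<bullet> (Q \<times> Q') = 0"
    by simp
qed

section \<open>The inscribed polygon\<close>

locale inscribed_polygon =
  fixes M :: "real^3^3" and N :: nat and U V :: "real^3" and X Y :: "nat \<Rightarrow> real^3"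
  assumes conic: "nondeg_conic M"
    and two_le_N: "2 \<le> N"
    and conic_vertices: "conic_points M ({U, V} \<union> X ` {1..N} \<union> Y ` {1..N})"
    and distinct_vertices: "distinct (U # V # map X [1..<N+1] @ map Y [1..<N+1])"
begin

abbreviation vertices :: "(real^3) set" where
  "vertices \<equiv> {U, V} \<union> X ` {1..N} \<union> Y ` {1..N}"

lemma conic_symmetric: "transpose M = M"
  using conic by (rule nondeg_conic_symmetric)

lemma swap: "inscribed_polygon M N U V Y X"
  using conic two_le_N conic_vertices distinct_vertices
  by unfold_locales (auto simp: Un_ac)

lemma inj_on_X: "inj_on X {1..N}" and inj_on_Y: "inj_on Y {1..N}"
  and X_Y_disjoint: "X ` {1..N} \<inter> Y ` {1..N} = {}"
  and U_V_notin: "U \<noteq> V" "U \<notin> X ` {1..N}" "U \<notin> Y ` {1..N}" "V \<notin> X ` {1..N}" "V \<notin> Y ` {1..N}"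
  using distinct_vertices by (simp_all del: upt_Suc add: distinct_map atLeastLessThanSuc_atLeastAtMost)

lemma X_eq_iff [simp]: "i \<in> {1..N} \<Longrightarrow> j \<in> {1..N} \<Longrightarrow> X i = X j \<longleftrightarrow> i = j"
  and Y_eq_iff [simp]: "i \<in> {1..N} \<Longrightarrow> j \<in> {1..N} \<Longrightarrow> Y i = Y j \<longleftrightarrow> i = j"
  using inj_on_X inj_on_Y by (auto simp: inj_on_eq_iff)

lemma vertices_ne [simp]:
  "i \<in> {1..N} \<Longrightarrow> j \<in> {1..N} \<Longrightarrow> X i \<noteq> Y j" "i \<in> {1..N} \<Longrightarrow> j \<in> {1..N} \<Longrightarrow> Y j \<noteq> X i"
  "i \<in> {1..N} \<Longrightarrow> U \<noteq> X i" "i \<in> {1..N} \<Longrightarrow> X i \<noteq> U"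
  "i \<in> {1..N} \<Longrightarrow> U \<noteq> Y i" "i \<in> {1..N} \<Longrightarrow> Y i \<noteq> U"
  "i \<in> {1..N} \<Longrightarrow> V \<noteq> X i" "i \<in> {1..N} \<Longrightarrow> X i \<noteq> V"
  "i \<in> {1..N} \<Longrightarrow> V \<noteq> Y i" "i \<in> {1..N} \<Longrightarrow> Y i \<noteq> V"
  "U \<noteq> V" "V \<noteq> U"
  using X_Y_disjoint U_V_notin by blast+

lemma conic_points_vertices: "T \<subseteq> vertices \<Longrightarrow> conic_points M T"
  using conic_vertices by (rule conic_points_subset)

lemma on_conic_vertex: "P \<in> vertices \<Longrightarrow> on_conic M P"
  using conic_vertices unfolding conic_points_def by blast

lemma chord_vertices: "P \<in> vertices \<Longrightarrow> Q \<in> vertices \<Longrightarrow> P \<noteq> Q \<Longrightarrow> P \<times> Q \<noteq> 0"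
  using conic_vertices unfolding conic_points_def by blast

definition WB :: "real^3" where "WB = (if even N then Y N else X N)"
definition WC :: "real^3" where "WC = (if even N then X N else Y N)"

definition A :: "nat \<Rightarrow> real^3" where "A i = (X i \<times> X (Suc i)) \<times> (Y i \<times> Y (Suc i))"
definition B :: "real^3" where "B = (U \<times> X 1) \<times> (WB \<times> V)"
definition C :: "real^3" where "C = (U \<times> Y 1) \<times> (WC \<times> V)"

definition point :: "nat \<Rightarrow> real^3" where
  "point i = (if i = N then B else if i = N + 1 then C else A i)"

lemma swaps_A:
  assumes "1 \<le> i" "i < N"
  shows "swaps M (A i) (X i) (X (Suc i))" "swaps M (A i) (Y i) (Y (Suc i))"
proof -
  have "conic_points M {X i, X (Suc i), Y i, Y (Suc i)}"
    using assms by (intro conic_points_vertices) auto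
  moreover have "distinct [X i, X (Suc i), Y i, Y (Suc i)]"
    using assms by simp
  ultimately show "swaps M (A i) (X i) (X (Suc i))" "swaps M (A i) (Y i) (Y (Suc i))"
    unfolding A_def by (simp_all add: swaps_chord_meet[OF conic])
qed

lemma swaps_B: "swaps M B U (X 1)" "swaps M B WB V"
proof -
  have "conic_points M {U, X 1, WB, V}"
    using two_le_N by (intro conic_points_vertices) (auto simp: WB_def)
  moreover have "distinct [U, X 1, WB, V]"
    using two_le_N by (simp add: WB_def)
  ultimately show "swaps M B U (X 1)" "swaps M B WB V"
    unfolding B_def by (simp_all add: swaps_chord_meet[OF conic])
qed

lemma swaps_C: "swaps M C U (Y 1)" "swaps M C WC V"
proof -
  have "conic_points M {U, Y 1, WC, V}"
    using two_le_N by (intro conic_points_vertices) (auto simp: WC_def)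
  moreover have "distinct [U, Y 1, WC, V]"
    using two_le_N by (simp add: WC_def)
  ultimately show "swaps M C U (Y 1)" "swaps M C WC V"
    unfolding C_def by (simp_all add: swaps_chord_meet[OF conic])
qed

definition A_path :: "nat \<Rightarrow> nat \<Rightarrow> (real^3) list" where
  "A_path a m = map A (rev [a..<m])"

lemma reflect_A_path:
  assumes "1 \<le> a" "a \<le> m" "m \<le> N"
  shows "reflect_list M (A_path a m) (X a) \<simeq> X m" "reflect_list M (A_path a m) (Y a) \<simeq> Y m"
  unfolding A_path_def using assms swaps_A
  by (auto intro!: reflect_list_chain simp: swaps_def)

lemma A_path_on_line:
  "(\<And>i. a \<le> i \<Longrightarrow> i < m \<Longrightarrow> l \<bullet> A i = 0) \<Longrightarrow> \<forall>p\<in>set (A_path a m). l \<bullet> p = 0"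
  by (simp add: A_path_def)

lemma cform_A_path: "1 \<le> a \<Longrightarrow> m \<le> N \<Longrightarrow> \<forall>p\<in>set (A_path a m). cform M p p \<noteq> 0"
  using swaps_A by (auto simp: A_path_def swaps_def)

lemma reflect_pair_B_C_Y1: "reflect_pair M True B C (Y 1) \<simeq> X 1"
proof -
  have "reflect M B (reflect M C (Y 1)) \<simeq> reflect M B U"
    using swaps_sym[OF conic_symmetric swaps_C(1)] by (simp add: swaps_def reflect_proportional)
  also have "\<dots> \<simeq> X 1"
    using swaps_B(1) by (simp add: swaps_def)
  finally show ?thesis
    by (simp add: reflect_pair_def)
qed

lemma reflect_pair_B_C_XN: "reflect_pair M (even N) B C (X N) \<simeq> Y N"
proof (cases "even N")
  case True
  then have "reflect M B (reflect M C (X N)) \<simeq> reflect M B V"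
    using swaps_C(2) by (simp add: swaps_def WC_def reflect_proportional)
  also have "\<dots> \<simeq> Y N"
    using swaps_sym[OF conic_symmetric swaps_B(2)] True by (simp add: swaps_def WB_def)
  finally show ?thesis
    using True by (simp add: reflect_pair_def)
next
  case False
  then have "reflect M C (reflect M B (X N)) \<simeq> reflect M C V"
    using swaps_B(2) by (simp add: swaps_def WB_def reflect_proportional)
  also have "\<dots> \<simeq> Y N"
    using swaps_sym[OF conic_symmetric swaps_C(2)] False by (simp add: swaps_def WC_def)
  finally show ?thesis
    using False by (simp add: reflect_pair_def)
qed

lemma X_reflect_pair_Y:
  assumes l: "l \<noteq> 0" and j: "1 \<le> j" "j \<le> N"
    and lA: "\<And>i. 1 \<le> i \<Longrightarrow> i < j \<Longrightarrow> l \<bullet> A i = 0" and lB: "l \<bullet> B = 0" and lC: "l \<bullet> C = 0"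
  shows "X j \<simeq> reflect_pair M (odd j) B C (Y j)"
proof -
  let ?K = "reflect_list M (A_path 1 j)"
  have "X j \<simeq> ?K (X 1)"
    using reflect_A_path(1) j by (blast intro: proportional_sym)
  also have "\<dots> \<simeq> ?K (reflect_pair M True B C (Y 1))"
    using reflect_pair_B_C_Y1 by (blast intro: reflect_list_proportional proportional_sym)
  also have "\<dots> = reflect_pair M (odd j) B C (?K (Y 1))"
  proof -
    have "(True = even (length (A_path 1 j))) = odd j"
      using j by (simp add: A_path_def; presburger)
    then show ?thesis
      using reflect_list_reflect_pair[OF conic_symmetric l A_path_on_line[OF lA] lB lC, where b = True and z = "Y 1"] by simp
  qed
  also have "\<dots> \<simeq> reflect_pair M (odd j) B C (Y j)"
    using reflect_A_path(2) j by (blast intro: reflect_pair_proportional)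
  finally show ?thesis .
qed

lemma Y_reflect_pair_X:
  assumes l: "l \<noteq> 0" and j: "1 \<le> j" "j \<le> N"
    and lA: "\<And>i. j \<le> i \<Longrightarrow> i < N \<Longrightarrow> l \<bullet> A i = 0" and lB: "l \<bullet> B = 0" and lC: "l \<bullet> C = 0"
  shows "Y j \<simeq> reflect_pair M (even j) B C (X j)"
proof -
  let ?K = "reflect_list M (A_path j N)"
  have "?K (Y j) \<simeq> Y N"
    using reflect_A_path(2) j by blast
  also have "\<dots> \<simeq> reflect_pair M (even N) B C (X N)"
    using reflect_pair_B_C_XN by (rule proportional_sym)
  also have "\<dots> \<simeq> reflect_pair M (even N) B C (?K (X j))"
    using reflect_A_path(1) j by (blast intro: reflect_pair_proportional proportional_sym)
  also have "\<dots> = ?K (reflect_pair M (even j) B C (X j))"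
  proof -
    have "(even j = even (length (A_path j N))) = even N"
      using j by (simp add: A_path_def; presburger)
    then show ?thesis
      using reflect_list_reflect_pair[OF conic_symmetric l A_path_on_line[OF lA] lB lC, where b = "even j" and z = "X j"] by simp
  qed
  finally show ?thesis
    using reflect_list_proportional_cancel[OF conic_symmetric cform_A_path] j by blast
qed

lemma reflect_line_meet_X_chord:
  assumes l: "l \<noteq> 0" and j: "1 \<le> j" "j < N"
    and lA: "\<And>i. 1 \<le> i \<Longrightarrow> i < N \<Longrightarrow> i \<noteq> j \<Longrightarrow> l \<bullet> A i = 0" and lB: "l \<bullet> B = 0" and lC: "l \<bullet> C = 0"
    and lX: "l \<bullet> X j \<noteq> 0"
  shows "reflect M (l \<times> (X j \<times> X (Suc j))) (Y j) \<simeq> Y (Suc j)"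
proof -
  define a where "a = l \<times> (X j \<times> X (Suc j))"
  have la: "l \<bullet> a = 0"
    by (simp add: a_def dot_cross_self)
  have "Y (Suc j) \<simeq> reflect_pair M (even (Suc j)) B C (X (Suc j))"
    by (rule Y_reflect_pair_X[OF l]) (use j lA lB lC in auto)
  then have "Y (Suc j) \<simeq> reflect_pair M (odd j) B C (X (Suc j))"
    by simp
  also have "\<dots> \<simeq> reflect_pair M (odd j) B C (reflect M a (X j))"
  proof -
    have "X j \<times> X (Suc j) \<noteq> 0"
      using j by (intro chord_vertices) auto
    then have "reflect M a (X j) \<simeq> X (Suc j)"
      unfolding a_def using j lX by (intro reflect_line_chord_meet[OF conic] on_conic_vertex) auto
    then show ?thesis
      by (rule reflect_pair_proportional[OF proportional_sym])
  qed
  also have "\<dots> \<simeq> reflect_pair M (odd j) B C (reflect M a (reflect_pair M (odd j) B C (Y j)))"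
  proof -
    have "X j \<simeq> reflect_pair M (odd j) B C (Y j)"
      by (rule X_reflect_pair_Y[OF l]) (use j lA lB lC in auto)
    then show ?thesis
      by (intro reflect_pair_proportional reflect_proportional)
  qed
  also have "\<dots> = reflect_pair M (odd j) B C (reflect_pair M (\<not> odd j) B C (reflect M a (Y j)))"
    by (simp only: reflect_reflect_pair[OF conic_symmetric l la lB lC])
  also have "\<dots> = ((cform M B B)\<^sup>2 * (cform M C C)\<^sup>2) *\<^sub>R reflect M a (Y j)"
    by (rule reflect_pair_cancel[OF conic_symmetric])
  finally have "Y (Suc j) \<simeq> reflect M a (Y j)"
    using swaps_B(1) swaps_C(1) by (simp add: swaps_def proportional_scaleR_right_iff)
  then show ?thesis
    unfolding a_def by (rule proportional_sym)
qed

lemma A_on_line: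
  assumes l: "l \<noteq> 0" and j: "1 \<le> j" "j < N"
    and lA: "\<And>i. 1 \<le> i \<Longrightarrow> i < N \<Longrightarrow> i \<noteq> j \<Longrightarrow> l \<bullet> A i = 0" and lB: "l \<bullet> B = 0" and lC: "l \<bullet> C = 0"
    and lX: "l \<bullet> X j \<noteq> 0"
  shows "l \<bullet> A j = 0"
proof -
  define a where "a = l \<times> (X j \<times> X (Suc j))"
  have "Y j \<times> Y (Suc j) \<noteq> 0"
    using j by (intro chord_vertices) auto
  then have "a \<noteq> 0" "a \<bullet> (Y j \<times> Y (Suc j)) = 0"
    using center_on_chord[OF reflect_line_meet_X_chord[OF assms]] by (simp_all add: a_def)
  moreover have "a \<bullet> (X j \<times> X (Suc j)) = 0" "a \<bullet> l = 0"
    by (simp_all add: a_def dot_cross_self inner_commute)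
  ultimately have "((X j \<times> X (Suc j)) \<times> (Y j \<times> Y (Suc j))) \<bullet> l = 0"
    by (intro triple_product_eq_0)
  then show ?thesis
    by (simp add: A_def inner_commute)
qed

lemma U_off_line:
  assumes "l \<noteq> 0" "l \<bullet> A 1 = 0" "l \<bullet> B = 0"
  shows "l \<bullet> U \<noteq> 0"
proof
  assume "l \<bullet> U = 0"
  then have "l \<bullet> X 1 = 0"
    using swaps_preserves_line[OF conic_symmetric swaps_B(1) assms(3)] by simp
  then have "l \<bullet> X 2 = 0"
    using swaps_preserves_line[OF conic_symmetric swaps_A(1) assms(2)] two_le_N by (simp add: numeral_2_eq_2)
  moreover have "conic_points M {U, X 1, X 2}" "distinct [U, X 1, X 2]"
    using two_le_N by (auto intro!: conic_points_vertices)
  ultimately show False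
    using conic_line_meets_at_most_two[OF conic _ _ assms(1)] \<open>l \<bullet> U = 0\<close> \<open>l \<bullet> X 1 = 0\<close> by blast
qed

lemma X_or_Y_off_line:
  assumes l: "l \<noteq> 0" and j: "1 \<le> j" "j \<le> N"
    and lA: "\<And>i. 1 \<le> i \<Longrightarrow> i < j \<Longrightarrow> l \<bullet> A i = 0" and lB: "l \<bullet> B = 0"
  shows "l \<bullet> X j \<noteq> 0 \<or> l \<bullet> Y j \<noteq> 0"
proof (rule ccontr)
  assume "\<not> ?thesis"
  then have XY: "l \<bullet> X j = 0" "l \<bullet> Y j = 0"
    by simp_all
  show False
  proof (cases "j = 1")
    case True
    then have "l \<bullet> U = 0"
      using swaps_preserves_line[OF conic_symmetric swaps_B(1) lB] XY by simp
    moreover have "conic_points M {U, X 1, Y 1}" "distinct [U, X 1, Y 1]"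
      using two_le_N by (auto intro!: conic_points_vertices)
    ultimately show False
      using conic_line_meets_at_most_two[OF conic _ _ l] XY True by blast
  next
    case False
    then obtain i where i: "j = Suc i" "1 \<le> i"
      using j by (cases j) auto
    then have "l \<bullet> X i = 0"
      using swaps_preserves_line[OF conic_symmetric swaps_A(1)[of i] lA[of i]] XY j by simp
    moreover have "conic_points M {X i, X j, Y j}"
      using i j by (intro conic_points_vertices) auto
    moreover have "distinct [X i, X j, Y j]"
      using i j by simp
    ultimately show False
      using conic_line_meets_at_most_two[OF conic _ _ l] XY by blast
  qed
qed

lemma Y_N_reflect_pair_line_meet:
  assumes l: "l \<noteq> 0" and lA: "\<And>i. 1 \<le> i \<Longrightarrow> i < N \<Longrightarrow> l \<bullet> A i = 0" and lB: "l \<bullet> B = 0"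
  shows "Y N \<simeq> reflect_pair M (odd N) (l \<times> (U \<times> Y 1)) B (X N)"
proof -
  define c where "c = l \<times> (U \<times> Y 1)"
  have lc: "l \<bullet> c = 0"
    by (simp add: c_def dot_cross_self)
  have "U \<times> Y 1 \<noteq> 0"
    using two_le_N by (intro chord_vertices) auto
  moreover have "l \<bullet> U \<noteq> 0"
    using U_off_line[OF l lA lB] two_le_N by simp
  ultimately have cU: "reflect M c U \<simeq> Y 1"
    unfolding c_def using two_le_N by (intro reflect_line_chord_meet[OF conic] on_conic_vertex) auto
  let ?K = "reflect_list M (A_path 1 N)"
  have "Y N \<simeq> ?K (Y 1)"
    using reflect_A_path(2)[of 1 N] two_le_N by (simp add: proportional_sym)
  also have "\<dots> \<simeq> ?K (reflect_pair M True c B (X 1))"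
  proof -
    have "reflect M B (X 1) \<simeq> U"
      using swaps_sym[OF conic_symmetric swaps_B(1)] by (simp add: swaps_def)
    then have "reflect_pair M True c B (X 1) \<simeq> reflect M c U"
      by (simp add: reflect_pair_def reflect_proportional)
    also note cU
    finally show ?thesis
      by (rule reflect_list_proportional[OF proportional_sym])
  qed
  also have "\<dots> = reflect_pair M (odd N) c B (?K (X 1))"
  proof -
    have "(True = even (length (A_path 1 N))) = odd N"
      using two_le_N by (simp add: A_path_def; presburger)
    then show ?thesis
      using reflect_list_reflect_pair[OF conic_symmetric l A_path_on_line[OF lA] lc lB, where b = True and z = "X 1"]
      by simp
  qed
  also have "\<dots> \<simeq> reflect_pair M (odd N) c B (X N)"
    using reflect_A_path(1)[of 1 N] two_le_N by (simp add: reflect_pair_proportional)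
  finally show ?thesis
    unfolding c_def .
qed

lemma line_meet_on_chord_WC_V:
  assumes l: "l \<noteq> 0" and lA: "\<And>i. 1 \<le> i \<Longrightarrow> i < N \<Longrightarrow> l \<bullet> A i = 0" and lB: "l \<bullet> B = 0"
  shows "l \<times> (U \<times> Y 1) \<noteq> 0" "(l \<times> (U \<times> Y 1)) \<bullet> (WC \<times> V) = 0"
proof -
  define c where "c = l \<times> (U \<times> Y 1)"
  have YN: "Y N \<simeq> reflect_pair M (odd N) c B (X N)"
    unfolding c_def using assms by (rule Y_N_reflect_pair_line_meet)
  have "c \<noteq> 0 \<and> c \<bullet> (WC \<times> V) = 0"
  proof (cases "even N")
    case True
    have "V \<simeq> reflect M B (Y N)"
      using swaps_B(2) True by (simp add: swaps_def WB_def proportional_sym)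
    also have "\<dots> \<simeq> reflect M B (reflect M B (reflect M c (X N)))"
      using YN True by (simp add: reflect_pair_def reflect_proportional)
    also have "\<dots> = (cform M B B)\<^sup>2 *\<^sub>R reflect M c (X N)"
      by (rule reflect_reflect[OF conic_symmetric])
    finally have "reflect M c WC \<simeq> V"
      using True swaps_B(1) by (simp add: WC_def swaps_def proportional_scaleR_right_iff proportional_sym)
    moreover have "WC \<times> V \<noteq> 0"
      using two_le_N by (intro chord_vertices) (auto simp: WC_def)
    ultimately show ?thesis
      using center_on_chord by blast
  next
    case False
    have "Y N \<simeq> reflect M c (reflect M B (X N))"
      using YN False by (simp add: reflect_pair_def)
    also have "\<dots> \<simeq> reflect M c V"
      using swaps_B(2) False by (simp add: swaps_def WB_def reflect_proportional)
    finally have "reflect M c V \<simeq> WC"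
      using False by (simp add: WC_def proportional_sym)
    moreover have "V \<times> WC \<noteq> 0"
      using two_le_N by (intro chord_vertices) (auto simp: WC_def)
    ultimately have "c \<noteq> 0" "c \<bullet> (V \<times> WC) = 0"
      by (rule center_on_chord)+
    then show ?thesis
      by (metis cross_skew inner_minus_right neg_equal_0_iff_equal)
  qed
  then show "l \<times> (U \<times> Y 1) \<noteq> 0" "(l \<times> (U \<times> Y 1)) \<bullet> (WC \<times> V) = 0"
    by (simp_all add: c_def)
qed

lemma C_on_line:
  assumes l: "l \<noteq> 0" and lA: "\<And>i. 1 \<le> i \<Longrightarrow> i < N \<Longrightarrow> l \<bullet> A i = 0" and lB: "l \<bullet> B = 0"
  shows "l \<bullet> C = 0"
proof -
  have "(l \<times> (U \<times> Y 1)) \<bullet> (U \<times> Y 1) = 0" "(l \<times> (U \<times> Y 1)) \<bullet> l = 0"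
    by (simp_all add: dot_cross_self inner_commute)
  then have "((U \<times> Y 1) \<times> (WC \<times> V)) \<bullet> l = 0"
    using line_meet_on_chord_WC_V[OF assms] by (intro triple_product_eq_0) auto
  then show ?thesis
    by (simp add: C_def inner_commute)
qed

lemma point_on_line:
  assumes l: "l \<noteq> 0" and k: "k \<in> {1..N+1}"
    and others: "\<And>i. i \<in> {1..N+1} \<Longrightarrow> i \<noteq> k \<Longrightarrow> l \<bullet> point i = 0"
  shows "l \<bullet> point k = 0"
proof -
  interpret swap: inscribed_polygon M N U V Y X
    by (rule swap)
  have swap_A: "swap.A i = - A i" for i
    by (metis A_def swap.A_def cross_skew)
  have swap_B: "swap.B = C" and swap_C: "swap.C = B"
    by (simp_all add: swap.B_def swap.C_def B_def C_def swap.WB_def swap.WC_def WB_def WC_def)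
  have lA: "l \<bullet> A i = 0" if "1 \<le> i" "i < N" "i \<noteq> k" for i
    using others[of i] that by (simp add: point_def)
  have lB: "l \<bullet> B = 0" if "k \<noteq> N"
    using others[of N] that two_le_N by (simp add: point_def)
  have lC: "l \<bullet> C = 0" if "k \<noteq> N + 1"
    using others[of "N + 1"] that two_le_N by (simp add: point_def)
  consider "k = N + 1" | "k = N" | "1 \<le> k" "k < N"
    using k by force
  then show ?thesis
  proof cases
    case 1
    then show ?thesis
      using C_on_line[OF l lA lB] by (simp add: point_def)
  next
    case 2
    then show ?thesis
      using swap.C_on_line[OF l] lA lC by (simp add: point_def swap_A swap_B swap_C)
  next
    case 3
    then have "l \<bullet> X k \<noteq> 0 \<or> l \<bullet> Y k \<noteq> 0"
      using X_or_Y_off_line[OF l] lA lB by simp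
    then show ?thesis
    proof
      assume "l \<bullet> X k \<noteq> 0"
      then show ?thesis
        using A_on_line[OF l] lA lB lC 3 by (simp add: point_def)
    next
      assume "l \<bullet> Y k \<noteq> 0"
      then show ?thesis
        using swap.A_on_line[OF l, of k] lA lB lC 3 by (simp add: point_def swap_A swap_B swap_C)
    qed
  qed
qed

end

lemma inscribed_polygon_of_vertex_list:
  assumes conic: "nondeg_conic M" and N2: "2 \<le> N"
    and vs: "vs = [U] @ map X [1..<N+1] @ [V] @ map Y (rev [1..<N+1])"
    and inscribed: "\<forall>P\<in>set vs. on_conic M P"
    and distinct: "\<forall>i<length vs. \<forall>j<length vs. i \<noteq> j \<longrightarrow> \<not> proj_same (vs ! i) (vs ! j)"
  shows "inscribed_polygon M N U V X Y"
proof
  have set_vs: "set vs = {U, V} \<union> X ` {1..N} \<union> Y ` {1..N}"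
    using vs by (auto simp del: upt_Suc simp: atLeastLessThanSuc_atLeastAtMost)
  have chord: "P \<times> Q \<noteq> 0" if "P \<in> set vs" "Q \<in> set vs" "P \<noteq> Q" for P Q
    using that distinct by (metis in_set_conv_nth proj_same_def)
  show "conic_points M ({U, V} \<union> X ` {1..N} \<union> Y ` {1..N})"
    using chord inscribed unfolding conic_points_def set_vs[symmetric] by blast
  have "distinct vs"
    using distinct unfolding distinct_conv_nth proj_same_def by (metis cross_refl)
  then show "distinct (U # V # map X [1..<N+1] @ map Y [1..<N+1])"
    using vs by (auto simp del: upt_Suc simp: rev_map[symmetric])
qed (use conic N2 in auto)

theorem theorem2:
  fixes M :: "real^3^3" and N :: nat and U V :: "real^3" and X Y :: "nat \<Rightarrow> real^3"
    and A :: "nat \<Rightarrow> real^3" and B C :: "real^3" and vs :: "(real^3) list"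
    and pts :: "nat \<Rightarrow> real^3"
  assumes conic: "nondeg_conic M"
    and N2: "N \<ge> 2"
    and vs_def: "vs = [U] @ map X [1..<N+1] @ [V] @ map Y (rev [1..<N+1])"
    and nonzero: "\<forall>P\<in>set vs. P \<noteq> 0"
    and inscribed: "\<forall>P\<in>set vs. on_conic M P"
    and distinct: "\<forall>i<length vs. \<forall>j<length vs. i \<noteq> j \<longrightarrow> \<not> proj_same (vs ! i) (vs ! j)"
    and A_def: "\<forall>j. A j = pmeet (pjoin (X j) (X (j+1))) (pjoin (Y j) (Y (j+1)))"
    and B_def: "B = (if even N then pmeet (pjoin U (X 1)) (pjoin (Y N) V)
                            else pmeet (pjoin U (X 1)) (pjoin (X N) V))"
    and C_def: "C = (if even N then pmeet (pjoin U (Y 1)) (pjoin (X N) V)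
                            else pmeet (pjoin U (Y 1)) (pjoin (Y N) V))"
    and pts_def: "\<forall>i. pts i = (if i = N then B else if i = N + 1 then C else A i)"
    and all_but_one: "\<exists>k\<in>{1..N+1}. proj_collinear (pts ` ({1..N+1} - {k}))"
  shows "proj_collinear (pts ` {1..N+1})"
proof -
  interpret P: inscribed_polygon M N U V X Y
    using conic N2 vs_def inscribed distinct by (rule inscribed_polygon_of_vertex_list)
  have pts: "pts = P.point"
    by (simp add: fun_eq_iff pts_def A_def B_def C_def P.point_def P.A_def P.B_def P.C_def P.WB_def P.WC_def
        pmeet_def pjoin_def)
  obtain k l where k: "k \<in> {1..N+1}" and l: "l \<noteq> 0" "\<forall>i\<in>{1..N+1} - {k}. l \<bullet> P.point i = 0"
    using all_but_one unfolding proj_collinear_def pts by blast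
  then have "l \<bullet> P.point i = 0" if "i \<in> {1..N+1}" for i
    using P.point_on_line[OF l(1) k] that by (cases "i = k") auto
  then show ?thesis
    unfolding proj_collinear_def pts using l(1) by blast
qed

end
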